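(* Assume the quadratic vector equation $Mx=a+b(x,x)$ has at least one solution, and let $x_\ast$ be its minimal solution. Then for each $i\in\{1,\dots,n\}$, $(x_\ast)_i>0$ if and only if there exists a positivity-showing sequence for $i$.
   Context: Inequalities between vectors are componentwise. An M-matrix is a matrix $sI-P$ with $P\geq0$ entrywise and $s\geq\rho(P)$ ($\rho$ = spectral radius). Let $M\in\mathbb R^{n\times n}$ be a nonsingular M-matrix, $a\in\mathbb R^n$ with $a\geq 0$, and $b:\mathbb R^n\times\mathbb R^n\to\mathbb R^n$ a bilinear map (not necessarily symmetric) with $b(x,y)\geq 0$ whenever $x,y\geq 0$. A solution means a vector $x\geq0$ with $Mx=a+b(x,x)$; a solution $x_\ast$ is minimal if $x_\ast\leq y$ for every solution $y$. Let $(M^{-1}B)_{rst}$ denote the tensor of the bilinear map $(x,y)\mapsto M^{-1}b(x,y)$, i.e. $(M^{-1}b(x,y))_t=\sum_{r,s}(M^{-1}B)_{rst}x_r y_s$. A finite sequence $S_1,\dots,S_N$ of subsets of $\{1,\dots,n\}$ is positivity-showing for $i$ if: (i) $S_1=\{h:(M^{-1}a)_h>0\}$; (ii) $S_h\subseteq S_{h+1}$ for each $h$; (iii) for each $h$ and each $t\in S_{h+1}\setminus S_h$ there exist $r,s\in S_h$ (possibly $r=s$) with $(M^{-1}B)_{rst}>0$; (iv) $i\in S_N$. *)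

theory Defs
  imports "HOL-Analysis.Analysis"
begin

definition cmat :: "real^'n^'n \<Rightarrow> complex^'n^'n" where
  "cmat A = (\<chi> i j. complex_of_real (A$i$j))"

definition spec_rad :: "real^'n^'n \<Rightarrow> real" where
  "spec_rad A = Sup {cmod l | l. \<exists>v::complex^'n. v \<noteq> 0 \<and> cmat A *v v = l *s v}"

definition is_M_matrix :: "real^'n^'n \<Rightarrow> bool" where
  "is_M_matrix M \<longleftrightarrow> (\<exists>s P. (\<forall>i j. 0 \<le> P$i$j) \<and> spec_rad P \<le> s
       \<and> M = s *\<^sub>R mat 1 - P)"

definition nonsingular_M_matrix :: "real^'n^'n \<Rightarrow> bool" where
  "nonsingular_M_matrix M \<longleftrightarrow> is_M_matrix M \<and> invertible M"

definition is_solution ::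
  "real^'n^'n \<Rightarrow> real^'n \<Rightarrow> (real^'n \<Rightarrow> real^'n \<Rightarrow> real^'n) \<Rightarrow> real^'n \<Rightarrow> bool" where
  "is_solution M a b x \<longleftrightarrow> (\<forall>i. 0 \<le> x$i) \<and> M *v x = a + b x x"

definition is_minimal_solution ::
  "real^'n^'n \<Rightarrow> real^'n \<Rightarrow> (real^'n \<Rightarrow> real^'n \<Rightarrow> real^'n) \<Rightarrow> real^'n \<Rightarrow> bool" where
  "is_minimal_solution M a b x \<longleftrightarrow> is_solution M a b x \<and>
     (\<forall>y. is_solution M a b y \<longrightarrow> (\<forall>i. x$i \<le> y$i))"

definition MinvB ::
  "real^'n^'n \<Rightarrow> (real^'n \<Rightarrow> real^'n \<Rightarrow> real^'n) \<Rightarrow> 'n \<Rightarrow> 'n \<Rightarrow> 'n \<Rightarrow> real" where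
  "MinvB M b r s t = (matrix_inv M *v b (axis r 1) (axis s 1)) $ t"

text \<open>Positivity-showing sequence S_1,...,S_N, represented as a nonempty list
  (0-based: S!0 = S_1, last S = S_N).\<close>
definition positivity_showing ::
  "real^'n^'n \<Rightarrow> real^'n \<Rightarrow> (real^'n \<Rightarrow> real^'n \<Rightarrow> real^'n) \<Rightarrow> 'n \<Rightarrow> 'n set list \<Rightarrow> bool" where
  "positivity_showing M a b i S \<longleftrightarrow>
     S \<noteq> [] \<and>
     S ! 0 = {h. (matrix_inv M *v a) $ h > 0} \<and>
     (\<forall>h. Suc h < length S \<longrightarrow> S ! h \<subseteq> S ! Suc h) \<and>
     (\<forall>h. Suc h < length S \<longrightarrow> (\<forall>t \<in> S ! Suc h - S ! h.
         \<exists>r \<in> S ! h. \<exists>s \<in> S ! h. MinvB M b r s t > 0)) \<and>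
     i \<in> last S"

end

theory Submission
  imports Defs
begin

(* Write N = M^{-1}.  The equation Mx = a + b(x,x) is equivalent to the fixed-point equation
   x = F x with F x = c + (sum over r,s of x_r x_s T_rst), where c = N a and T = M^{-1}B.
   The only matrix-theoretic input is that N has nonnegative entries (first section).  It is
   proved by a continuation argument in t for the shifted matrices tI - P: inverse positivity
   holds for large t, the set where it holds is open below and closed above as long as tI - P
   stays nonsingular, and tI - P is nonsingular for every t above the spectral radius of P.
   The second section treats a quadratic map F with nonnegative coefficients c, T in general:
   - the indices forced positive form the inductive set "reach" generated by {t. c_t > 0} and
     the rule "r, s reached and T_rst > 0 imply t reached"; positivity-showing sequences are
     exactly finite stages of this generation process;
   - every nonnegative fixed point is positive on reach (rule induction);
   - the least fixed point vanishes outside reach: cutting it down to zero outside reach gives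
     a supersolution y >= F y, and the monotone iterates F^k 0 converge to a fixed point below
     every nonnegative supersolution. *)

section \<open>Inverse-positive matrices and nonsingular M-matrices\<close>

definition inverse_positive :: "real^'n^'n \<Rightarrow> bool" where
  "inverse_positive A \<longleftrightarrow> (\<forall>y. (\<forall>i. 0 \<le> (A *v y)$i) \<longrightarrow> (\<forall>i. 0 \<le> y$i))"

lemma ex_argmin: fixes f :: "'n::finite \<Rightarrow> real" shows "\<exists>i. \<forall>j. f i \<le> f j"
  using ex_is_arg_min_if_finite[of UNIV f] by (auto simp: is_arg_min_def not_less)

lemma ex_argmax: fixes f :: "'n::finite \<Rightarrow> real" shows "\<exists>i. \<forall>j. f j \<le> f i"
  using ex_argmin[of "\<lambda>j. - f j"] by auto

lemma shifted_matrix_component: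
  "((t *\<^sub>R mat 1 - P) *v y) $ i = t * y$i - (\<Sum>j\<in>UNIV. P$i$j * y$j)"
  by (simp add: matrix_vector_mult_diff_rdistrib scaleR_matrix_vector_assoc[symmetric])
     (simp add: matrix_vector_mult_def)

text \<open>An inverse-positive matrix has trivial kernel (apply the definition to y and to -y).\<close>
lemma inverse_positive_det_nz:
  assumes "inverse_positive A" shows "det A \<noteq> 0"
proof -
  have "inj ((*v) A)"
  proof (rule linear_injective_0[OF matrix_vector_mul_linear, THEN iffD2], intro allI impI)
    fix x assume x: "A *v x = 0"
    have "\<forall>i. 0 \<le> x$i" using assms x unfolding inverse_positive_def by auto
    moreover have "A *v (-x) = 0" using x by (metis matrix_vector_mult_diff_distrib diff_0 diff_self)
    then have "\<forall>i. 0 \<le> (-x)$i" using assms unfolding inverse_positive_def by (metis order_refl zero_index)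
    ultimately show "x = 0" by (simp add: vec_eq_iff) (meson antisym neg_0_le_iff_le)
  qed
  then show ?thesis using det_nz_iff_inj[OF matrix_vector_mul_linear, of A] by simp
qed

text \<open>For t larger than the total mass of P >= 0, the matrix tI - P is inverse positive:
  at a most negative coordinate of y the row of (tI - P)y would be negative.\<close>
lemma inverse_positive_shift_large:
  fixes P :: "real^'n^'n"
  assumes P: "\<forall>i j. 0 \<le> P$i$j" and t: "t > (\<Sum>i\<in>UNIV. \<Sum>j\<in>UNIV. P$i$j)"
  shows "inverse_positive (t *\<^sub>R mat 1 - P)"
  unfolding inverse_positive_def
proof (rule allI, rule impI)
  fix y :: "real^'n" assume h: "\<forall>i. 0 \<le> ((t *\<^sub>R mat 1 - P) *v y)$i"
  obtain i0 where i0: "\<forall>j. y$i0 \<le> y$j" using ex_argmin[of "\<lambda>j. y$j"] by blast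
  show "\<forall>i. 0 \<le> y$i"
  proof (rule ccontr)
    assume "\<not> (\<forall>i. 0 \<le> y$i)"
    then have neg: "y$i0 < 0" using i0 by (meson le_less_trans not_le)
    let ?row = "\<Sum>j\<in>UNIV. P$i0$j"
    have "0 \<le> t * y$i0 - (\<Sum>j\<in>UNIV. P$i0$j * y$j)"
      using h[rule_format, of i0] by (simp add: shifted_matrix_component)
    moreover have "?row * y$i0 \<le> (\<Sum>j\<in>UNIV. P$i0$j * y$j)"
      unfolding sum_distrib_right by (intro sum_mono) (simp add: P i0 mult_left_mono)
    ultimately have nonneg: "0 \<le> (t - ?row) * y$i0" by (simp add: algebra_simps)
    have "?row \<le> (\<Sum>i\<in>UNIV. \<Sum>j\<in>UNIV. P$i$j)"
      by (rule member_le_sum) (auto simp: P sum_nonneg)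
    then have "0 < t - ?row" using t by linarith
    then have "(t - ?row) * y$i0 < 0" using neg by (rule mult_pos_neg)
    with nonneg show False by linarith
  qed
qed

text \<open>With u = (tI - P)^{-1} 1 >= 0, a negative minimum -m of y would give the contradiction
  m <= (t - t') m u_i < m.\<close>
lemma inverse_positive_shift_down:
  fixes P :: "real^'n^'n"
  assumes Q: "inverse_positive (t *\<^sub>R mat 1 - P)"
  shows "\<exists>\<delta>>0. \<forall>t'. t - \<delta> \<le> t' \<and> t' \<le> t \<longrightarrow> inverse_positive (t' *\<^sub>R mat 1 - P)"
proof -
  let ?A = "t *\<^sub>R mat 1 - P"
  obtain u where u: "?A *v u = 1" using cramer[OF inverse_positive_det_nz[OF Q], of _ 1] by blast
  have u0: "\<forall>i. 0 \<le> u$i" using Q u unfolding inverse_positive_def by simp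
  define K where "K = (\<Sum>i\<in>UNIV. u$i)"
  have K0: "0 \<le> K" unfolding K_def using u0 by (simp add: sum_nonneg)
  have uK: "u$i \<le> K" for i unfolding K_def by (rule member_le_sum) (auto simp: u0)
  define \<delta> where "\<delta> = 1 / (K+1)"
  have dpos: "\<delta> > 0" and dK: "\<delta> * K < 1" using K0 by (simp_all add: \<delta>_def field_simps)
  show ?thesis
  proof (intro exI[of _ \<delta>] conjI allI impI dpos)
    fix t' assume t': "t - \<delta> \<le> t' \<and> t' \<le> t"
    define d where "d = t - t'"
    have d: "0 \<le> d" "d \<le> \<delta>" using t' by (auto simp: d_def)
    show "inverse_positive (t' *\<^sub>R mat 1 - P)" unfolding inverse_positive_def
    proof (rule allI, rule impI)
      fix y :: "real^'n" assume h: "\<forall>i. 0 \<le> ((t' *\<^sub>R mat 1 - P) *v y)$i"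
      show "\<forall>i. 0 \<le> y$i"
      proof (rule ccontr)
        assume "\<not> (\<forall>i. 0 \<le> y$i)"
        then obtain i1 where i1: "y$i1 < 0" by (auto simp: not_le)
        obtain i0 where i0: "\<forall>j. y$i0 \<le> y$j" using ex_argmin[of "\<lambda>j. y$j"] by blast
        define m where "m = - y$i0"
        have mpos: "m > 0" using i0[rule_format, of i1] i1 unfolding m_def by linarith
        have "0 \<le> (?A *v (y + (d*m) *\<^sub>R u))$i" for i
        proof -
          have "(?A *v (y + (d*m) *\<^sub>R u))$i = (?A *v y)$i + d*m"
            using u by (simp add: matrix_vector_right_distrib matrix_vector_mult_scaleR)
          also have "(?A *v y)$i = ((t' *\<^sub>R mat 1 - P) *v y)$i + d * y$i"
            unfolding shifted_matrix_component d_def by (simp add: algebra_simps)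
          finally have "(?A *v (y + (d*m) *\<^sub>R u))$i = ((t' *\<^sub>R mat 1 - P) *v y)$i + d * (y$i + m)"
            by (simp add: algebra_simps)
          moreover have "0 \<le> y$i + m" using i0[rule_format, of i] unfolding m_def by linarith
          ultimately show ?thesis using h d by simp
        qed
        then have "0 \<le> (y + (d*m) *\<^sub>R u)$i0" using Q unfolding inverse_positive_def by blast
        then have "m \<le> d*m*u$i0" unfolding m_def by simp
        also have "\<dots> \<le> d*m*K" using uK d mpos by (simp add: mult_left_mono)
        also have "\<dots> \<le> \<delta>*m*K" using d mpos K0 by (simp add: mult_right_mono)
        also have "\<dots> < m" using dK mpos by (simp add: mult.commute mult.left_commute)
        finally show False by simp
      qed
    qed
  qed
qed

lemma tendsto_det:
  fixes f :: "'a \<Rightarrow> real^'n^'n"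
  assumes "\<And>i j. ((\<lambda>t. f t $i$j) \<longlongrightarrow> g$i$j) F"
  shows "((\<lambda>t. det (f t)) \<longlongrightarrow> det g) F"
  unfolding det_def by (intro tendsto_intros assms)

text \<open>Closedness upwards: inverse positivity on (t0, t0 + e) passes to t0 as long as
  t0 I - P is nonsingular, since by Cramer's rule the solutions of (tI - P)x = z depend
  continuously on t.\<close>
lemma inverse_positive_shift_limit:
  fixes P :: "real^'n^'n"
  assumes d0: "det (t0 *\<^sub>R mat 1 - P) \<noteq> 0" and e: "\<epsilon> > 0"
    and Q: "\<forall>t'. t0 < t' \<and> t' < t0 + \<epsilon> \<longrightarrow> inverse_positive (t' *\<^sub>R mat 1 - P)"
  shows "inverse_positive (t0 *\<^sub>R mat 1 - P)"
  unfolding inverse_positive_def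
proof (rule allI, rule impI)
  fix y :: "real^'n"
  let ?z = "(t0 *\<^sub>R mat 1 - P) *v y"
  assume h: "\<forall>i. 0 \<le> ?z$i"
  define C where "C t k = (\<chi> i j. if j=k then ?z$i else (t *\<^sub>R mat 1 - P)$i$j)" for t k
  define X where "X t = (\<chi> k. det (C t k) / det (t *\<^sub>R mat 1 - P))" for t
  have y: "y = X t0" using cramer[OF d0, of y ?z] unfolding X_def C_def by simp
  have ev: "eventually (\<lambda>t. 0 \<le> X t $ k) (at_right t0)" for k
    unfolding eventually_at_right_field
  proof (intro exI[of _ "t0+\<epsilon>"] conjI allI impI)
    show "t0 < t0 + \<epsilon>" using e by simp
    fix t assume "t0 < t" "t < t0 + \<epsilon>"
    then have Qt: "inverse_positive (t *\<^sub>R mat 1 - P)" using Q by blast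
    have "(t *\<^sub>R mat 1 - P) *v X t = ?z"
      using cramer[OF inverse_positive_det_nz[OF Qt], of "X t" ?z] unfolding X_def C_def by simp
    then show "0 \<le> X t $ k" using Qt h unfolding inverse_positive_def by metis
  qed
  have lim: "((\<lambda>t. X t $ k) \<longlongrightarrow> X t0 $ k) (at_right t0)" for k
  proof -
    have entries: "((\<lambda>t. t * mat 1 $ i $ j - P $ i $ j) \<longlongrightarrow> t0 * mat 1$i$j - P$i$j) (at_right t0)"
      for i j by (intro tendsto_intros)
    have "((\<lambda>t. det (C t k)) \<longlongrightarrow> det (C t0 k)) (at_right t0)"
      by (rule tendsto_det) (auto simp: C_def entries)
    moreover have "((\<lambda>t. det (t *\<^sub>R mat 1 - P)) \<longlongrightarrow> det (t0 *\<^sub>R mat 1 - P)) (at_right t0)"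
      by (rule tendsto_det) (simp add: entries)
    ultimately show ?thesis unfolding X_def using d0 by (simp add: tendsto_divide)
  qed
  show "\<forall>k. 0 \<le> y$k" unfolding y by (intro allI tendsto_lowerbound[OF lim ev]) simp
qed

text \<open>The modulus of every (complex) eigenvalue of P is bounded by the total absolute mass
  of P; hence the set whose supremum defines the spectral radius is bounded.\<close>
lemma eigenvalue_norm_bound:
  fixes P :: "real^'n^'n" and v :: "complex^'n"
  assumes v: "v \<noteq> 0" and ev: "cmat P *v v = l *s v"
  shows "cmod l \<le> (\<Sum>i\<in>UNIV. \<Sum>j\<in>UNIV. \<bar>P$i$j\<bar>)"
proof -
  obtain i0 where i0: "\<forall>j. cmod (v$j) \<le> cmod (v$i0)" using ex_argmax[of "\<lambda>j. cmod (v$j)"] by blast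
  have pos: "cmod (v$i0) > 0"
  proof (rule ccontr)
    assume "\<not> cmod (v$i0) > 0"
    then have "\<forall>j. v$j = 0" using i0 by (metis norm_le_zero_iff not_less order_trans)
    then show False using v by (simp add: vec_eq_iff)
  qed
  have "l * v$i0 = (\<Sum>j\<in>UNIV. complex_of_real (P$i0$j) * v$j)"
    using arg_cong[OF ev, of "\<lambda>w. w$i0"] by (simp add: matrix_vector_mult_def cmat_def)
  then have "cmod l * cmod (v$i0) = cmod (\<Sum>j\<in>UNIV. complex_of_real (P$i0$j) * v$j)"
    by (metis norm_mult)
  also have "\<dots> \<le> (\<Sum>j\<in>UNIV. \<bar>P$i0$j\<bar> * cmod (v$j))"
    by (rule order_trans[OF norm_sum]) (simp add: norm_mult)
  also have "\<dots> \<le> (\<Sum>j\<in>UNIV. \<bar>P$i0$j\<bar>) * cmod (v$i0)"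
    unfolding sum_distrib_right by (intro sum_mono mult_left_mono) (auto simp: i0)
  also have "\<dots> \<le> (\<Sum>i\<in>UNIV. \<Sum>j\<in>UNIV. \<bar>P$i$j\<bar>) * cmod (v$i0)"
    by (intro mult_right_mono member_le_sum) (auto simp: sum_nonneg)
  finally show ?thesis using pos by simp
qed

text \<open>Above the spectral radius, tI - P is nonsingular: a kernel vector would make t a
  real eigenvalue of P.\<close>
lemma shift_det_nz_above_spec_rad:
  fixes P :: "real^'n^'n"
  assumes sp: "spec_rad P \<le> s" and st: "s < t"
  shows "det (t *\<^sub>R mat 1 - P) \<noteq> 0"
proof
  let ?A = "t *\<^sub>R mat 1 - P"
  let ?S = "{cmod l | l. \<exists>v::complex^'n. v \<noteq> 0 \<and> cmat P *v v = l *s v}"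
  assume "det ?A = 0"
  then have "\<not> inj ((*v) ?A)" using det_nz_iff_inj[OF matrix_vector_mul_linear, of ?A] by simp
  then obtain v where v: "?A *v v = 0" "v \<noteq> 0"
    using linear_injective_0[OF matrix_vector_mul_linear, of ?A] by blast
  define cv where "cv = (\<chi> i. complex_of_real (v$i))"
  have cv0: "cv \<noteq> 0" using v(2) by (simp add: cv_def vec_eq_iff)
  have comp: "t * v$i = (\<Sum>j\<in>UNIV. P$i$j * v$j)" for i
    using arg_cong[OF v(1), of "\<lambda>w. w$i"] by (simp add: shifted_matrix_component)
  have "cmat P *v cv = complex_of_real t *s cv"
  proof (subst vec_eq_iff, rule allI)
    fix i
    have "(cmat P *v cv)$i = complex_of_real (\<Sum>j\<in>UNIV. P$i$j * v$j)"
      by (simp add: matrix_vector_mult_def cmat_def cv_def)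
    then show "(cmat P *v cv)$i = (complex_of_real t *s cv)$i" by (simp add: comp[symmetric] cv_def)
  qed
  then have mem: "cmod (complex_of_real t) \<in> ?S" using cv0 by blast
  have bdd: "bdd_above ?S"
    by (rule bdd_aboveI[of _ "\<Sum>i\<in>UNIV. \<Sum>j\<in>UNIV. \<bar>P$i$j\<bar>"]) (auto intro: eigenvalue_norm_bound)
  have "cmod (complex_of_real t) \<le> spec_rad P"
    unfolding spec_rad_def by (rule cSup_upper[OF mem bdd])
  then show False using sp st by simp
qed

text \<open>The continuation argument: let ts be the infimum of those t >= s above which all shifts
  are inverse positive.  By closedness ts itself qualifies, and by openness ts cannot exceed s.\<close>
lemma inverse_positive_M_matrix:
  fixes P :: "real^'n^'n"
  assumes P: "\<forall>i j. 0 \<le> P$i$j" and sp: "spec_rad P \<le> s" and d: "det (s *\<^sub>R mat 1 - P) \<noteq> 0"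
  shows "inverse_positive (s *\<^sub>R mat 1 - P)"
proof -
  define B where "B = {t. s \<le> t \<and> (\<forall>t'. t \<le> t' \<longrightarrow> inverse_positive (t' *\<^sub>R mat 1 - P))}"
  define T1 where "T1 = max s ((\<Sum>i\<in>UNIV. \<Sum>j\<in>UNIV. P$i$j) + 1)"
  have large: "T1 \<in> B"
    unfolding B_def T1_def by (auto intro!: inverse_positive_shift_large[OF P])
  have bdd: "bdd_below B" unfolding B_def by (rule bdd_belowI[of _ s]) auto
  define ts where "ts = Inf B"
  have sts: "s \<le> ts" unfolding ts_def using large by (intro cInf_greatest) (auto simp: B_def)
  have above: "inverse_positive (t' *\<^sub>R mat 1 - P)" if above_ts: "ts < t'" for t'
  proof -
    have "B \<noteq> {}" using large by blast
    then obtain b where "b \<in> B" "b < t'" using cInf_lessD[of B t'] above_ts unfolding ts_def by blast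
    then show ?thesis unfolding B_def by auto
  qed
  have "det (ts *\<^sub>R mat 1 - P) \<noteq> 0"
    using d shift_det_nz_above_spec_rad[OF sp] sts by (cases "ts = s") auto
  then have Qts: "inverse_positive (ts *\<^sub>R mat 1 - P)"
    by (rule inverse_positive_shift_limit[of _ _ 1]) (auto intro: above)
  have "ts = s"
  proof (rule ccontr)
    assume ne: "ts \<noteq> s"
    obtain \<delta> where dl: "\<delta> > 0" "\<forall>t'. ts - \<delta> \<le> t' \<and> t' \<le> ts \<longrightarrow> inverse_positive (t' *\<^sub>R mat 1 - P)"
      using inverse_positive_shift_down[OF Qts] by blast
    define t2 where "t2 = max s (ts - \<delta>)"
    have "t2 \<in> B" unfolding B_def
    proof (intro CollectI conjI allI impI)
      show "s \<le> t2" by (simp add: t2_def)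
      fix t' assume "t2 \<le> t'"
      then show "inverse_positive (t' *\<^sub>R mat 1 - P)"
        using dl above unfolding t2_def by (cases "t' \<le> ts") auto
    qed
    then have "ts \<le> t2" unfolding ts_def by (rule cInf_lower[OF _ bdd])
    then show False using ne sts dl(1) by (simp add: t2_def)
  qed
  then show ?thesis using Qts by simp
qed

lemma nonsingular_M_matrix_inverse:
  assumes "nonsingular_M_matrix M"
  shows "M ** matrix_inv M = mat 1" and "matrix_inv M ** M = mat 1"
    and "\<And>v. \<forall>i. 0 \<le> v$i \<Longrightarrow> \<forall>i. 0 \<le> (matrix_inv M *v v)$i"
proof -
  obtain s P where P: "\<forall>i j. 0 \<le> P$i$j" "spec_rad P \<le> s" "M = s *\<^sub>R mat 1 - P"
    and inv: "invertible M"
    using assms unfolding nonsingular_M_matrix_def is_M_matrix_def by blast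
  show MN: "M ** matrix_inv M = mat 1" and "matrix_inv M ** M = mat 1"
    using inv unfolding invertible_def matrix_inv_def by (metis (mono_tags, lifting) someI_ex)+
  have "inverse_positive M"
    using inverse_positive_M_matrix[OF P(1,2)] inv P(3) invertible_det_nz by blast
  moreover have "M *v (matrix_inv M *v v) = v" for v using MN by (simp add: matrix_vector_mul_assoc)
  ultimately show "\<forall>i. 0 \<le> (matrix_inv M *v v)$i" if "\<forall>i. 0 \<le> v$i" for v
    using that unfolding inverse_positive_def by metis
qed

section \<open>Quadratic maps with nonnegative coefficients\<close>

locale nonneg_quadratic_map =
  fixes c :: "real^'n::finite" and T :: "'n \<Rightarrow> 'n \<Rightarrow> 'n \<Rightarrow> real"
  assumes c_nonneg: "0 \<le> c$t" and T_nonneg: "0 \<le> T r s t"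
begin

definition F :: "real^'n \<Rightarrow> real^'n" where
  "F x = (\<chi> t. c$t + (\<Sum>(r,s)\<in>UNIV\<times>UNIV. x$r * x$s * T r s t))"

lemma F_nth: "F x $ t = c$t + (\<Sum>(r,s)\<in>UNIV\<times>UNIV. x$r * x$s * T r s t)"
  by (simp add: F_def)

lemma quadratic_term_nonneg: "\<forall>i. 0 \<le> x$i \<Longrightarrow> 0 \<le> x$r * x$s * T r s t"
  using T_nonneg by simp

lemma F_nonneg: "\<forall>i. 0 \<le> x$i \<Longrightarrow> 0 \<le> F x $ t"
  unfolding F_nth using c_nonneg quadratic_term_nonneg
  by (intro add_nonneg_nonneg sum_nonneg) (auto simp: case_prod_unfold)

lemma F_mono:
  assumes x0: "\<forall>i. 0 \<le> x$i" and xy: "\<forall>i. x$i \<le> y$i"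
  shows "F x $ t \<le> F y $ t"
  unfolding F_nth
proof (intro add_left_mono sum_mono, clarsimp)
  fix r s
  have "x$r * x$s \<le> y$r * y$s" using x0 xy by (meson mult_mono order_trans)
  then show "x$r * x$s * T r s t \<le> y$r * y$s * T r s t" using T_nonneg by (rule mult_right_mono)
qed

lemma fixed_point_lower_bounds:
  assumes x0: "\<forall>i. 0 \<le> x$i" and fix_x: "F x = x"
  shows "c$t \<le> x$t" and "x$r * x$s * T r s t \<le> x$t"
proof -
  let ?Q = "\<Sum>(r,s)\<in>UNIV\<times>UNIV. x$r * x$s * T r s t"
  have x_eq: "x$t = c$t + ?Q" using F_nth[of x t] fix_x by simp
  have "x$r * x$s * T r s t \<le> ?Q"
    using member_le_sum[of "(r,s)" "UNIV \<times> UNIV" "\<lambda>(r,s). x$r * x$s * T r s t"]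
      quadratic_term_nonneg[OF x0] by (auto simp: case_prod_unfold)
  moreover have "0 \<le> ?Q"
    using quadratic_term_nonneg[OF x0] by (intro sum_nonneg) (auto simp: case_prod_unfold)
  ultimately show "c$t \<le> x$t" and "x$r * x$s * T r s t \<le> x$t"
    using x_eq c_nonneg[of t] by linarith+
qed

lemma iterates_between:
  assumes y0: "\<forall>j. 0 \<le> y$j" and Fy: "\<forall>j. F y $ j \<le> y$j"
  shows "\<forall>j. 0 \<le> (F^^k) 0 $ j \<and> (F^^k) 0 $ j \<le> (F^^Suc k) 0 $ j \<and> (F^^k) 0 $ j \<le> y$j"
proof (induction k)
  case 0
  show ?case using y0 F_nonneg[of 0] by simp
next
  case (Suc k)
  let ?x = "(F^^k) 0"
  have "F ?x $ j \<le> F (F ?x) $ j" and "F ?x $ j \<le> F y $ j" for j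
    using Suc by (auto intro!: F_mono)
  then show ?case using Suc Fy F_nonneg order_trans by (simp, blast)
qed

text \<open>A nonnegative supersolution dominates a nonnegative fixed point: the limit of the
  Kleene iterates.  (Consequently the least fixed point lies below every supersolution.)\<close>
lemma fixed_point_below_supersolution:
  assumes y0: "\<forall>j. 0 \<le> y$j" and Fy: "\<forall>j. F y $ j \<le> y$j"
  shows "\<exists>z. (\<forall>j. 0 \<le> z$j) \<and> F z = z \<and> (\<forall>j. z$j \<le> y$j)"
proof -
  define x where "x k = (F ^^ k) 0" for k
  have bnd: "0 \<le> x k $ j" "x k $ j \<le> x (Suc k) $ j" "x k $ j \<le> y$j" for k j
    using iterates_between[OF y0 Fy, of k] unfolding x_def by auto
  define z where "z = (\<chi> j. SUP k. x k $ j)"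
  have lim: "(\<lambda>k. x k $ j) \<longlonglongrightarrow> z$j" for j
    unfolding z_def vec_lambda_beta
    by (rule LIMSEQ_incseq_SUP) (auto intro!: incseq_SucI bdd_aboveI[of _ "y$j"] simp: bnd)
  have "F z = z"
  proof (subst vec_eq_iff, rule allI)
    fix t
    have "(\<lambda>k. F (x k) $ t) \<longlonglongrightarrow> F z $ t"
      unfolding F_nth case_prod_unfold by (intro tendsto_intros lim)
    moreover have "(\<lambda>k. F (x k) $ t) \<longlonglongrightarrow> z$t"
      using LIMSEQ_Suc[OF lim] by (simp add: x_def)
    ultimately show "F z $ t = z$t" by (rule LIMSEQ_unique)
  qed
  moreover have "0 \<le> z$j" for j by (rule tendsto_lowerbound[OF lim]) (simp_all add: bnd)
  moreover have "z$j \<le> y$j" for j by (rule tendsto_upperbound[OF lim]) (simp_all add: bnd)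
  ultimately show ?thesis by blast
qed

inductive_set reach :: "'n set" where
  source: "0 < c$t \<Longrightarrow> t \<in> reach"
| step: "r \<in> reach \<Longrightarrow> s \<in> reach \<Longrightarrow> 0 < T r s t \<Longrightarrow> t \<in> reach"

lemma fixed_point_positive_on_reach:
  assumes x0: "\<forall>i. 0 \<le> x$i" and fix_x: "F x = x" and t: "t \<in> reach"
  shows "0 < x$t"
  using t
proof induction
  case (source t)
  then show ?case using fixed_point_lower_bounds(1)[OF x0 fix_x, of t] by linarith
next
  case (step r s t)
  then have "0 < x$r * x$s * T r s t" by simp
  then show ?case using fixed_point_lower_bounds(2)[OF x0 fix_x, of r s t] by linarith
qed

text \<open>Conversely, the least nonnegative fixed point vanishes outside reach: its restriction
  to reach is a supersolution, hence dominates a fixed point.\<close>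
lemma least_fixed_point_support:
  assumes xs0: "\<forall>i. 0 \<le> xs$i" and fix_xs: "F xs = xs"
    and least: "\<And>z. \<forall>i. 0 \<le> z$i \<Longrightarrow> F z = z \<Longrightarrow> xs$j \<le> z$j"
    and pos: "0 < xs$j"
  shows "j \<in> reach"
proof -
  define y where "y = (\<chi> t. if t \<in> reach then xs$t else 0)"
  have y0: "\<forall>t. 0 \<le> y$t" and y_xs: "\<forall>t. y$t \<le> xs$t" using xs0 by (simp_all add: y_def)
  have "F y $ t \<le> y$t" for t
  proof (cases "t \<in> reach")
    case True
    then show ?thesis using F_mono[OF y0 y_xs, of t] fix_xs by (simp add: y_def)
  next
    case False
    then have "c$t \<le> 0" using reach.source by force
    moreover have "y$r * y$s * T r s t = 0" for r s
      using False reach.step[of r s t] T_nonneg[of r s t] by (auto simp: y_def)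
    then have "(\<Sum>(r,s)\<in>UNIV\<times>UNIV. y$r * y$s * T r s t) = 0"
      by (intro sum.neutral) auto
    ultimately show ?thesis using False by (simp add: F_nth y_def)
  qed
  then obtain z where "\<forall>t. 0 \<le> z$t" "F z = z" "\<forall>t. z$t \<le> y$t"
    using fixed_point_below_supersolution[OF y0] by blast
  then have "xs$j \<le> y$j" using least by (meson order_trans)
  then show ?thesis using pos by (simp add: y_def split: if_splits)
qed

definition showing_sequence :: "'n \<Rightarrow> 'n set list \<Rightarrow> bool" where
  "showing_sequence i S \<longleftrightarrow>
     S \<noteq> [] \<and> S ! 0 = {h. 0 < c$h} \<and>
     (\<forall>h. Suc h < length S \<longrightarrow> S ! h \<subseteq> S ! Suc h) \<and>
     (\<forall>h. Suc h < length S \<longrightarrow> (\<forall>t \<in> S ! Suc h - S ! h. \<exists>r \<in> S ! h. \<exists>s \<in> S ! h. 0 < T r s t)) \<and>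
     i \<in> last S"

lemma showing_sequence_reach:
  assumes S: "showing_sequence i S" shows "i \<in> reach"
proof -
  have "S ! h \<subseteq> reach" if "h < length S" for h
    using that
  proof (induction h)
    case 0
    then show ?case using S reach.source unfolding showing_sequence_def by auto
  next
    case (Suc h)
    then have prev: "S ! h \<subseteq> reach" by simp
    show ?case
    proof
      fix t assume t: "t \<in> S ! Suc h"
      show "t \<in> reach"
      proof (cases "t \<in> S ! h")
        case False
        then obtain r s where "r \<in> S ! h" "s \<in> S ! h" "0 < T r s t"
          using S Suc.prems t unfolding showing_sequence_def by blast
        then show ?thesis using prev reach.step by blast
      qed (use prev in blast)
    qed
  qed
  moreover have "i \<in> S ! (length S - 1)" "length S - 1 < length S"
    using S last_conv_nth[of S] unfolding showing_sequence_def by auto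
  ultimately show ?thesis by blast
qed

definition stage :: "nat \<Rightarrow> 'n set" where
  "stage k = ((\<lambda>A. A \<union> {t. \<exists>r\<in>A. \<exists>s\<in>A. 0 < T r s t}) ^^ k) {t. 0 < c$t}"

lemma stage_0: "stage 0 = {t. 0 < c$t}"
  and stage_Suc: "stage (Suc k) = stage k \<union> {t. \<exists>r\<in>stage k. \<exists>s\<in>stage k. 0 < T r s t}"
  by (simp_all add: stage_def)

lemma stage_mono: "k \<le> l \<Longrightarrow> stage k \<subseteq> stage l"
  by (rule lift_Suc_mono_le[of stage]) (auto simp: stage_Suc)

lemma reach_in_stage: "t \<in> reach \<Longrightarrow> \<exists>k. t \<in> stage k"
proof (induction rule: reach.induct)
  case (source t)
  then show ?case using stage_0 by blast
next
  case (step r s t)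
  then obtain k l where "r \<in> stage k" "s \<in> stage l" by blast
  then have "r \<in> stage (max k l)" "s \<in> stage (max k l)"
    using stage_mono[of k "max k l"] stage_mono[of l "max k l"] by auto
  then have "t \<in> stage (Suc (max k l))" using step.hyps(3) by (auto simp: stage_Suc)
  then show ?case by blast
qed

lemma stage_showing_sequence:
  assumes "i \<in> stage k" shows "showing_sequence i (map stage [0..<Suc k])"
  using assms unfolding showing_sequence_def
  by (simp add: nth_map stage_0 last_map del: upt_Suc) (auto simp: stage_Suc)

theorem least_fixed_point_positivity:
  assumes xs0: "\<forall>i. 0 \<le> xs$i" and fix_xs: "F xs = xs"
    and least: "\<And>z j. \<forall>i. 0 \<le> z$i \<Longrightarrow> F z = z \<Longrightarrow> xs$j \<le> z$j"
  shows "0 < xs$i \<longleftrightarrow> (\<exists>S. showing_sequence i S)"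
proof
  assume "0 < xs$i"
  then have "i \<in> reach" using least_fixed_point_support[OF xs0 fix_xs least] by blast
  then show "\<exists>S. showing_sequence i S" using reach_in_stage stage_showing_sequence by blast
next
  assume "\<exists>S. showing_sequence i S"
  then show "0 < xs$i"
    using showing_sequence_reach fixed_point_positive_on_reach[OF xs0 fix_xs] by blast
qed

end

section \<open>The quadratic vector equation as a fixed-point problem\<close>

lemma bilinear_expansion:
  fixes b :: "real^'n \<Rightarrow> real^'n \<Rightarrow> real^'n" and N :: "real^'n^'n"
  assumes bl: "bilinear b"
  shows "(N *v b x y)$t = (\<Sum>(r,s)\<in>UNIV\<times>UNIV. x$r * y$s * (N *v b (axis r 1) (axis s 1))$t)"
proof -
  have "b x y = b (\<Sum>r\<in>UNIV. x$r *\<^sub>R axis r 1) (\<Sum>s\<in>UNIV. y$s *\<^sub>R axis s 1)"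
    using basis_expansion[of x] basis_expansion[of y] by (simp add: scalar_mult_eq_scaleR)
  also have "\<dots> = (\<Sum>(r,s)\<in>UNIV\<times>UNIV. b (x$r *\<^sub>R axis r 1) (y$s *\<^sub>R axis s 1))"
    by (rule bilinear_sum[OF bl])
  also have "\<dots> = (\<Sum>(r,s)\<in>UNIV\<times>UNIV. (x$r * y$s) *\<^sub>R b (axis r 1) (axis s 1))"
    by (intro sum.cong) (auto simp: bilinear_lmul[OF bl] bilinear_rmul[OF bl])
  finally have "N *v b x y = (\<Sum>(r,s)\<in>UNIV\<times>UNIV. (x$r * y$s) *\<^sub>R (N *v b (axis r 1) (axis s 1)))"
    by (simp add: linear_sum[OF matrix_vector_mul_linear] case_prod_unfold o_def matrix_vector_mult_scaleR)
  then show ?thesis by (simp add: case_prod_unfold)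
qed

text \<open>The setting of the theorem, with the nonnegativity of M^{-1} as a hypothesis.
  Its data c = M^{-1} a and T = M^{-1}B form a nonnegative quadratic map.\<close>
locale quadratic_vector_equation =
  fixes M :: "real^'n::finite^'n" and a :: "real^'n" and b :: "real^'n \<Rightarrow> real^'n \<Rightarrow> real^'n"
  assumes inv_right: "M ** matrix_inv M = mat 1" and inv_left: "matrix_inv M ** M = mat 1"
    and inv_nonneg: "\<And>v. \<forall>i. 0 \<le> v$i \<Longrightarrow> \<forall>i. 0 \<le> (matrix_inv M *v v)$i"
    and a_nonneg: "\<forall>i. 0 \<le> a$i"
    and b_bilinear: "bilinear b"
    and b_nonneg: "\<forall>x y. (\<forall>i. 0 \<le> x$i) \<longrightarrow> (\<forall>i. 0 \<le> y$i) \<longrightarrow> (\<forall>i. 0 \<le> b x y $ i)"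
begin

sublocale nonneg_quadratic_map "matrix_inv M *v a" "MinvB M b"
proof
  show "0 \<le> (matrix_inv M *v a) $ t" for t using inv_nonneg a_nonneg by blast
  have "\<forall>i. 0 \<le> b (axis r 1) (axis s 1) $ i" for r s using b_nonneg by (simp add: axis_def)
  then show "0 \<le> MinvB M b r s t" for r s t unfolding MinvB_def using inv_nonneg by blast
qed

lemma solution_iff_fixed_point: "is_solution M a b y \<longleftrightarrow> (\<forall>i. 0 \<le> y$i) \<and> F y = y"
proof -
  have F_eq: "F y = matrix_inv M *v (a + b y y)"
  proof (subst vec_eq_iff, rule allI)
    fix t
    show "F y $ t = (matrix_inv M *v (a + b y y)) $ t"
      unfolding F_nth matrix_vector_right_distrib vector_add_component MinvB_def
        bilinear_expansion[OF b_bilinear, of "matrix_inv M" y y t] ..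
  qed
  have "M *v (matrix_inv M *v v) = v" and "matrix_inv M *v (M *v v) = v" for v
    using inv_right inv_left by (simp_all add: matrix_vector_mul_assoc)
  then have "M *v y = a + b y y \<longleftrightarrow> y = matrix_inv M *v (a + b y y)" by metis
  then show ?thesis unfolding is_solution_def F_eq by auto
qed

lemma positivity_showing_iff: "positivity_showing M a b i S \<longleftrightarrow> showing_sequence i S"
  unfolding positivity_showing_def showing_sequence_def ..

end

theorem mainTheorem14:
  fixes M :: "real^'n^'n" and a :: "real^'n" and b :: "real^'n \<Rightarrow> real^'n \<Rightarrow> real^'n"
    and xs :: "real^'n"
  assumes "nonsingular_M_matrix M"
    and "\<forall>i. 0 \<le> a$i"
    and "bilinear b"
    and "\<forall>x y. (\<forall>i. 0 \<le> x$i) \<longrightarrow> (\<forall>i. 0 \<le> y$i) \<longrightarrow> (\<forall>i. 0 \<le> b x y $ i)"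
    and "\<exists>y. is_solution M a b y"
    and "is_minimal_solution M a b xs"
  shows "\<forall>i. xs$i > 0 \<longleftrightarrow> (\<exists>S. positivity_showing M a b i S)"
proof -
  interpret quadratic_vector_equation M a b
    using nonsingular_M_matrix_inverse[OF assms(1)] assms(2-4) by unfold_locales auto
  have xs: "\<forall>i. 0 \<le> xs$i" "F xs = xs"
    and least: "\<And>z j. \<forall>i. 0 \<le> z$i \<Longrightarrow> F z = z \<Longrightarrow> xs$j \<le> z$j"
    using assms(6) unfolding is_minimal_solution_def solution_iff_fixed_point by auto
  show ?thesis
    using least_fixed_point_positivity[OF xs least] positivity_showing_iff by blast
qed

end
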